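(* Let $\lambda=\lambda^x\otimes\mu\in\Pi(\mu,\nu,\gamma)$ with $\lambda^x\in\Pi(\nu^x,\gamma^x)$ for $\mu$-a.e. $x$, where $\pi_{XY}\#\lambda=\nu^x\otimes\mu$ and $\pi_{XZ}\#\lambda=\gamma^x\otimes\mu$. If $\lambda^x$ is an extreme point of $\Pi(\nu^x,\gamma^x)$ for $\mu$-a.e. $x\in X$, then $\lambda$ is an extreme point of $\Pi(\lambda^{XY},\gamma)\cap\Pi(\lambda^{XZ},\nu)$.
   Context: $X,Y,Z$ are complete separable metric spaces with Borel probability measures $\mu,\nu,\gamma$; $\Pi(\mu,\nu,\gamma)$ is the set of Borel probability measures on $X\times Y\times Z$ with those marginals, and $\Pi(\sigma,\eta)$ the set of probability measures on a product with marginals $\sigma,\eta$. $\pi_{XY},\pi_{XZ}$ are projections; $\lambda^{XY}=\pi_{XY}\#\lambda$, $\lambda^{XZ}=\pi_{XZ}\#\lambda$. $\Pi(\lambda^{XY},\gamma)=\{\rho\in\Pi(\mu,\nu,\gamma):\pi_{XY}\#\rho=\lambda^{XY}\}$ and $\Pi(\lambda^{XZ},\nu)=\{\rho\in\Pi(\mu,\nu,\gamma):\pi_{XZ}\#\rho=\lambda^{XZ}\}$. For a measure $\sigma$ on $A$ and a measurable family $(\eta^a)$ of probability measures on $B$, $\eta^a\otimes\sigma$ is the measure with $(\eta^a\otimes\sigma)(E\times F)=\int_E\eta^a(F)d\sigma(a)$ (disintegration, unique up to $\sigma$-null sets). *)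

theory Defs
  imports "HOL-Probability.Probability"
begin

definition borel_prob :: "'a::topological_space measure \<Rightarrow> bool" where
  "borel_prob M \<longleftrightarrow> prob_space M \<and> sets M = sets borel"

definition couplings ::
  "'a::topological_space measure \<Rightarrow> 'b::topological_space measure \<Rightarrow> ('a \<times> 'b) measure set" where
  "couplings \<sigma> \<eta> = {\<rho>. borel_prob \<rho> \<and> distr \<rho> borel fst = \<sigma> \<and> distr \<rho> borel snd = \<eta>}"

definition piXY :: "'a \<times> 'b \<times> 'c \<Rightarrow> 'a \<times> 'b" where
  "piXY = (\<lambda>(x, y, z). (x, y))"

definition piXZ :: "'a \<times> 'b \<times> 'c \<Rightarrow> 'a \<times> 'c" where
  "piXZ = (\<lambda>(x, y, z). (x, z))"

definition couplings3 ::
  "'a::topological_space measure \<Rightarrow> 'b::topological_space measure \<Rightarrow> 'c::topological_space measure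
    \<Rightarrow> ('a \<times> 'b \<times> 'c) measure set" where
  "couplings3 \<mu> \<nu> \<gamma> = {\<rho>. borel_prob \<rho> \<and> distr \<rho> borel fst = \<mu>
      \<and> distr \<rho> borel (\<lambda>(x, y, z). y) = \<nu> \<and> distr \<rho> borel (\<lambda>(x, y, z). z) = \<gamma>}"

text \<open>Pi(lambda^XY, gamma) and Pi(lambda^XZ, nu), as subsets of Pi(mu, nu, gamma).\<close>
definition couplings_XY ::
  "'a::topological_space measure \<Rightarrow> 'b::topological_space measure \<Rightarrow> 'c::topological_space measure
    \<Rightarrow> ('a \<times> 'b) measure \<Rightarrow> ('a \<times> 'b \<times> 'c) measure set" where
  "couplings_XY \<mu> \<nu> \<gamma> \<sigma> = {\<rho> \<in> couplings3 \<mu> \<nu> \<gamma>. distr \<rho> borel piXY = \<sigma>}"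

definition couplings_XZ ::
  "'a::topological_space measure \<Rightarrow> 'b::topological_space measure \<Rightarrow> 'c::topological_space measure
    \<Rightarrow> ('a \<times> 'c) measure \<Rightarrow> ('a \<times> 'b \<times> 'c) measure set" where
  "couplings_XZ \<mu> \<nu> \<gamma> \<sigma> = {\<rho> \<in> couplings3 \<mu> \<nu> \<gamma>. distr \<rho> borel piXZ = \<sigma>}"

definition is_convex_comb :: "real \<Rightarrow> 'a::topological_space measure \<Rightarrow> 'a measure \<Rightarrow> 'a measure \<Rightarrow> bool" where
  "is_convex_comb t \<rho>1 \<rho>2 \<rho> \<longleftrightarrow>
     (\<forall>A \<in> sets borel. emeasure \<rho> A = ennreal t * emeasure \<rho>1 A + ennreal (1 - t) * emeasure \<rho>2 A)"

definition extreme_point :: "'a::topological_space measure set \<Rightarrow> 'a measure \<Rightarrow> bool" where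
  "extreme_point C \<rho> \<longleftrightarrow> \<rho> \<in> C \<and>
     (\<forall>\<rho>1 \<in> C. \<forall>\<rho>2 \<in> C. \<forall>t::real. 0 < t \<and> t < 1 \<and> is_convex_comb t \<rho>1 \<rho>2 \<rho> \<longrightarrow> \<rho>1 = \<rho>2)"

text \<open>rho = K^a \<otimes> sigma: (K a) is a measurable family of Borel probability measures on B
  (kernel) and rho(E x F) = integral over E of K^a(F) d sigma(a).\<close>
definition disintegration ::
  "('a::topological_space \<Rightarrow> 'b::topological_space measure) \<Rightarrow> 'a measure \<Rightarrow> ('a \<times> 'b) measure \<Rightarrow> bool" where
  "disintegration K \<sigma> \<rho> \<longleftrightarrow> K \<in> measurable \<sigma> (prob_algebra borel) \<and>
     (\<forall>E \<in> sets borel. \<forall>F \<in> sets borel. emeasure \<rho> (E \<times> F) = (\<integral>\<^sup>+ a \<in> E. emeasure (K a) F \<partial>\<sigma>))"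

end

theory Submission
  imports Defs
begin

text \<open>Let \<open>\<lambda> = t \<rho>1 + (1 - t) \<rho>2\<close> with \<open>\<rho>1, \<rho>2\<close> in the intersection. Both \<open>\<rho>i\<close> are absolutely
  continuous with respect to \<open>\<lambda>\<close>, say \<open>\<rho>i = fi \<lambda>\<close>, so they disintegrate over \<open>\<mu>\<close> into the fibre
  measures \<open>\<rho>i\<^sup>x = fi(x, \<cdot>) \<lambda>\<^sup>x\<close>. As \<open>\<rho>i\<close> has the same XY- and XZ-marginals as \<open>\<lambda>\<close>, testing
  against countable generators shows that \<open>\<rho>i\<^sup>x\<close> has the same marginals as \<open>\<lambda>\<^sup>x\<close> for
  \<open>\<mu>\<close>-a.e. \<open>x\<close>; and \<open>t f1 + (1 - t) f2 = 1\<close> \<open>\<lambda>\<close>-a.e. gives \<open>\<lambda>\<^sup>x = t \<rho>1\<^sup>x + (1 - t) \<rho>2\<^sup>x\<close>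
  for a.e. \<open>x\<close>. Extremality of \<open>\<lambda>\<^sup>x\<close> forces \<open>\<rho>1\<^sup>x = \<rho>2\<^sup>x\<close> a.e., hence \<open>\<rho>1 = \<rho>2\<close>.\<close>

lemma fst_measurable_borel: "fst \<in> (borel :: ('a::topological_space \<times> 'b::topological_space) measure) \<rightarrow>\<^sub>M borel"
  by (rule borel_measurable_continuous_onI) (intro continuous_intros)

lemma snd_measurable_borel: "snd \<in> (borel :: ('a::topological_space \<times> 'b::topological_space) measure) \<rightarrow>\<^sub>M borel"
  by (rule borel_measurable_continuous_onI) (intro continuous_intros)

lemma Pair_measurable_borel:
  "Pair x \<in> (borel :: 'b::topological_space measure) \<rightarrow>\<^sub>M (borel :: ('a::topological_space \<times> 'b) measure)"
  by (rule borel_measurable_continuous_onI) (intro continuous_intros)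

lemma piXY_measurable_borel:
  "piXY \<in> (borel :: ('a::topological_space \<times> 'b::topological_space \<times> 'c::topological_space) measure) \<rightarrow>\<^sub>M borel"
  unfolding piXY_def case_prod_unfold
  by (rule borel_measurable_continuous_onI) (intro continuous_intros)

lemma piXZ_measurable_borel:
  "piXZ \<in> (borel :: ('a::topological_space \<times> 'b::topological_space \<times> 'c::topological_space) measure) \<rightarrow>\<^sub>M borel"
  unfolding piXZ_def case_prod_unfold
  by (rule borel_measurable_continuous_onI) (intro continuous_intros)

lemma countable_Int_stable_generator_borel:
  "\<exists>\<G>::'a::second_countable_topology set set. countable \<G> \<and> Int_stable \<G> \<and> UNIV \<in> \<G> \<and>
     \<G> \<subseteq> sets borel \<and> sets borel = sigma_sets UNIV \<G>"
proof -
  obtain B :: "'a set set" where B: "countable B" "topological_basis B"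
    using ex_countable_basis by blast
  define \<G> where "\<G> = Inter ` {F. finite F \<and> F \<subseteq> B}"
  have "countable \<G>"
    unfolding \<G>_def using B by (intro countable_image countable_Collect_finite_subset)
  moreover have "Int_stable \<G>"
    unfolding \<G>_def Int_stable_def
  proof safe
    fix F G assume "finite F" "F \<subseteq> B" "finite G" "G \<subseteq> B"
    then show "\<Inter>F \<inter> \<Inter>G \<in> Inter ` {F. finite F \<and> F \<subseteq> B}"
      by (intro image_eqI[of _ _ "F \<union> G"]) auto
  qed
  moreover have "UNIV \<in> \<G>"
    unfolding \<G>_def by (intro image_eqI[of _ _ "{}"]) auto
  moreover have "\<G> \<subseteq> sets borel"
    using B(2) unfolding \<G>_def by (auto intro!: borel_open open_Inter dest: topological_basis_open)
  moreover have "sets borel = sigma_sets UNIV \<G>"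
  proof
    have "B \<subseteq> \<G>" unfolding \<G>_def by (auto intro!: image_eqI[where x="{b}" for b])
    then show "sets borel \<subseteq> sigma_sets UNIV \<G>"
      unfolding borel_eq_countable_basis[OF B] by (simp add: sigma_sets_mono')
    show "sigma_sets UNIV \<G> \<subseteq> sets borel"
      using \<open>\<G> \<subseteq> sets borel\<close> by (metis sets.sigma_sets_subset space_borel)
  qed
  ultimately show ?thesis by blast
qed

lemma finite_measure_eq_on_generator:
  fixes M N :: "'a::topological_space measure"
  assumes "Int_stable \<G>" "UNIV \<in> \<G>" "sets borel = sigma_sets UNIV \<G>"
    and "sets M = sets borel" "sets N = sets borel"
    and "\<And>A. A \<in> \<G> \<Longrightarrow> emeasure M A = emeasure N A"
    and "emeasure M UNIV \<noteq> \<infinity>"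
  shows "M = N"
  by (rule measure_eqI_generator_eq[where E=\<G> and \<Omega>=UNIV and A="\<lambda>_. UNIV"]) (use assms in auto)

lemma emeasure_density_convex_comb:
  assumes "f \<in> borel_measurable M" "g \<in> borel_measurable M" "A \<in> sets M"
  shows "emeasure (density M (\<lambda>w. ennreal t * f w + ennreal (1 - t) * g w)) A =
     ennreal t * emeasure (density M f) A + ennreal (1 - t) * emeasure (density M g) A"
proof -
  have "emeasure (density M (\<lambda>w. ennreal t * f w + ennreal (1 - t) * g w)) A =
      (\<integral>\<^sup>+w. ennreal t * (f w * indicator A w) + ennreal (1 - t) * (g w * indicator A w) \<partial>M)"
    using assms by (simp add: emeasure_density distrib_right mult.assoc)
  also have "\<dots> = ennreal t * emeasure (density M f) A + ennreal (1 - t) * emeasure (density M g) A"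
    using assms by (simp add: nn_integral_add nn_integral_cmult emeasure_density)
  finally show ?thesis .
qed

lemma is_convex_comb_commute: "is_convex_comb t \<rho>1 \<rho>2 \<rho> \<Longrightarrow> is_convex_comb (1 - t) \<rho>2 \<rho>1 \<rho>"
  by (simp add: is_convex_comb_def add.commute)

lemma absolutely_continuous_if_is_convex_comb:
  assumes "is_convex_comb t \<rho>1 \<rho>2 \<rho>" "0 < t" "sets \<rho> = sets borel" "sets \<rho>1 = sets borel"
  shows "absolutely_continuous \<rho> \<rho>1"
  unfolding absolutely_continuous_def
proof
  fix A assume "A \<in> null_sets \<rho>"
  then have "A \<in> sets borel" "emeasure \<rho> A = 0"
    using assms(3) by (auto simp: null_sets_def)
  with assms show "A \<in> null_sets \<rho>1"
    by (simp add: is_convex_comb_def null_sets_def)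
qed

locale borel_disintegration =
  fixes \<mu> :: "'x::second_countable_topology measure"
    and lam :: "('x \<times> 'w::second_countable_topology) measure"
    and L :: "'x \<Rightarrow> 'w measure"
  assumes borel_prob_\<mu>: "borel_prob \<mu>" and borel_prob_lam: "borel_prob lam"
    and disintegration: "disintegration L \<mu> lam"
begin

lemma sets_\<mu> [measurable_cong]: "sets \<mu> = sets borel"
  using borel_prob_\<mu> by (simp add: borel_prob_def)

lemma space_\<mu> [simp]: "space \<mu> = UNIV"
  using sets_eq_imp_space_eq[OF sets_\<mu>] by simp

lemma sets_lam [measurable_cong]: "sets lam = sets borel"
  using borel_prob_lam by (simp add: borel_prob_def)

lemma space_lam [simp]: "space lam = UNIV"
  using sets_eq_imp_space_eq[OF sets_lam] by simp

lemma L_measurable [measurable]: "L \<in> \<mu> \<rightarrow>\<^sub>M subprob_algebra borel"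
  using disintegration by (simp add: disintegration_def measurable_prob_algebraD)

lemma sets_L [measurable_cong]: "sets (L x) = sets borel"
  using subprob_measurableD(2)[OF L_measurable, of x] by simp

lemma emeasure_lam_Times:
  "E \<in> sets borel \<Longrightarrow> F \<in> sets borel \<Longrightarrow>
    emeasure lam (E \<times> F) = (\<integral>\<^sup>+ x. emeasure (L x) F * indicator E x \<partial>\<mu>)"
  using disintegration by (simp add: disintegration_def)

lemma sets_pair_\<mu>_borel: "sets (\<mu> \<Otimes>\<^sub>M (borel :: 'w measure)) = sets (borel :: ('x \<times> 'w) measure)"
  by (subst sets_pair_measure_cong[OF sets_\<mu> refl]) (subst borel_prod, rule refl)

lemma measurable_section_L:
  "g \<in> borel_measurable (borel :: ('x \<times> 'w) measure) \<Longrightarrow> (\<lambda>w. g (x, w)) \<in> borel_measurable (L x)"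
  unfolding measurable_cong_sets[OF sets_L refl] by (drule measurable_compose[OF Pair_measurable_borel]) simp

lemma measurable_nn_integral_L:
  assumes "g \<in> borel_measurable (borel :: ('x \<times> 'w) measure)"
  shows "(\<lambda>x. \<integral>\<^sup>+w. g (x, w) \<partial>L x) \<in> borel_measurable \<mu>"
proof (rule nn_integral_measurable_subprob_algebra2[OF _ L_measurable])
  show "(\<lambda>(x, w). g (x, w)) \<in> borel_measurable (\<mu> \<Otimes>\<^sub>M borel)"
    unfolding measurable_cong_sets[OF sets_pair_\<mu>_borel refl] using assms by (simp add: case_prod_beta')
qed

lemma Pair_measurable_L: "Pair x \<in> L x \<rightarrow>\<^sub>M (borel :: ('x \<times> 'w) measure)"
  unfolding measurable_cong_sets[OF sets_L refl] by (rule Pair_measurable_borel)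

lemma kernel_measurable:
  "(\<lambda>x. distr (L x) borel (Pair x)) \<in> \<mu> \<rightarrow>\<^sub>M subprob_algebra (borel :: ('x \<times> 'w) measure)"
proof (rule measurable_distr2[OF _ L_measurable])
  show "(\<lambda>(x, w). (x, w)) \<in> \<mu> \<Otimes>\<^sub>M borel \<rightarrow>\<^sub>M (borel :: ('x \<times> 'w) measure)"
    unfolding measurable_cong_sets[OF sets_pair_\<mu>_borel refl] by (simp add: case_prod_beta')
qed

lemma lam_eq_bind: "lam = \<mu> \<bind> (\<lambda>x. distr (L x) borel (Pair x))"
proof -
  let ?K = "\<lambda>x. distr (L x) borel (Pair x)"
  let ?R = "{E \<times> F | E F. E \<in> sets (borel :: 'x measure) \<and> F \<in> sets (borel :: 'w measure)}"
  have generator: "sets (borel :: ('x \<times> 'w) measure) = sigma_sets UNIV ?R"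
    by (subst borel_prod[symmetric]) (simp add: sets_pair_measure)
  show ?thesis
  proof (rule finite_measure_eq_on_generator[OF _ _ generator])
    show "Int_stable ?R"
      using Int_stable_pair_measure_generator[of "borel :: 'x measure" "borel :: 'w measure"] by simp
    show "UNIV \<in> ?R" by (intro CollectI exI[of _ UNIV]) simp
    show "sets (\<mu> \<bind> ?K) = sets borel"
      by (rule sets_bind[OF sets_kernel[OF kernel_measurable]]) auto
    show "emeasure lam UNIV \<noteq> \<infinity>"
      using borel_prob_lam prob_space.emeasure_space_1[of lam] by (simp add: borel_prob_def)
    fix A assume "A \<in> ?R"
    then obtain E F where A: "A = E \<times> F" "E \<in> sets borel" "F \<in> sets borel" by auto
    have "emeasure (\<mu> \<bind> ?K) A = (\<integral>\<^sup>+x. emeasure (?K x) A \<partial>\<mu>)"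
      by (rule emeasure_bind[OF _ kernel_measurable]) (use A in \<open>auto intro: borel_Times\<close>)
    also have "\<dots> = (\<integral>\<^sup>+x. emeasure (L x) F * indicator E x \<partial>\<mu>)"
    proof (rule nn_integral_cong)
      fix x
      have "emeasure (?K x) A = emeasure (L x) (Pair x -` A)"
        using A by (subst emeasure_distr[OF Pair_measurable_L]) (auto intro: borel_Times)
      then show "emeasure (?K x) A = emeasure (L x) F * indicator E x"
        using A by (auto simp: indicator_def)
    qed
    finally show "emeasure lam A = emeasure (\<mu> \<bind> ?K) A"
      using A emeasure_lam_Times by simp
  qed (rule sets_lam)
qed

lemma nn_integral_lam:
  assumes "g \<in> borel_measurable (borel :: ('x \<times> 'w) measure)"
  shows "(\<integral>\<^sup>+p. g p \<partial>lam) = (\<integral>\<^sup>+x. \<integral>\<^sup>+w. g (x, w) \<partial>L x \<partial>\<mu>)"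
proof -
  have "(\<integral>\<^sup>+p. g p \<partial>lam) = (\<integral>\<^sup>+x. \<integral>\<^sup>+p. g p \<partial>distr (L x) borel (Pair x) \<partial>\<mu>)"
    by (subst lam_eq_bind, rule nn_integral_bind[OF assms kernel_measurable])
  also have "\<dots> = (\<integral>\<^sup>+x. \<integral>\<^sup>+w. g (x, w) \<partial>L x \<partial>\<mu>)"
    using assms by (simp add: nn_integral_distr[OF Pair_measurable_L])
  finally show ?thesis .
qed

lemma AE_lam_imp_AE_L:
  assumes "AE p in lam. P p"
  shows "AE x in \<mu>. AE w in L x. P (x, w)"
proof -
  obtain N where N: "{p. \<not> P p} \<subseteq> N" "emeasure lam N = 0" "N \<in> sets borel"
    using AE_E[OF assms] unfolding space_lam sets_lam by auto
  have ind_N: "(indicator N :: _ \<Rightarrow> ennreal) \<in> borel_measurable borel"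
    using N(3) by (rule borel_measurable_indicator)
  have "(\<integral>\<^sup>+x. \<integral>\<^sup>+w. indicator N (x, w) \<partial>L x \<partial>\<mu>) = 0"
    using N(2,3) nn_integral_lam[OF ind_N] by (simp add: sets_lam)
  then have "AE x in \<mu>. (\<integral>\<^sup>+w. indicator N (x, w) \<partial>L x) = 0"
    by (subst (asm) nn_integral_0_iff_AE[OF measurable_nn_integral_L[OF ind_N]])
  then show ?thesis
  proof eventually_elim
    case (elim x)
    then have "AE w in L x. indicator N (x, w) = (0 :: ennreal)"
      by (subst (asm) nn_integral_0_iff_AE[OF measurable_section_L[OF ind_N]])
    then show "AE w in L x. P (x, w)"
      by eventually_elim (use N(1) in \<open>auto simp: indicator_def\<close>)
  qed
qed

lemma finite_measure_\<mu>: "finite_measure \<mu>"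
  using borel_prob_\<mu> by (simp add: borel_prob_def prob_space_def)

text \<open>For \<open>\<rho>\<close> absolutely continuous with respect to \<open>lam\<close> these are the fibre measures \<open>\<rho>\<^sup>x\<close>
  of \<open>\<rho> = \<rho>\<^sup>x \<otimes> \<mu>\<close>.\<close>

definition cond_measure :: "('x \<times> 'w) measure \<Rightarrow> 'x \<Rightarrow> 'w measure" where
  "cond_measure \<rho> x = density (L x) (\<lambda>w. RN_deriv lam \<rho> (x, w))"

lemma sets_cond_measure [measurable_cong]: "sets (cond_measure \<rho> x) = sets borel"
  by (simp add: cond_measure_def sets_L)

lemma RN_deriv_lam_measurable [measurable]: "RN_deriv lam \<rho> \<in> borel_measurable borel"
  using borel_measurable_RN_deriv[of lam \<rho>] measurable_cong_sets[OF sets_lam refl] by simp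

lemma emeasure_cond_measure:
  "S \<in> sets borel \<Longrightarrow>
    emeasure (cond_measure \<rho> x) S = (\<integral>\<^sup>+w. RN_deriv lam \<rho> (x, w) * indicator S w \<partial>L x)"
  unfolding cond_measure_def
  by (rule emeasure_density[OF measurable_section_L[OF RN_deriv_lam_measurable]]) (simp add: sets_L)

lemma measurable_emeasure_cond_measure:
  assumes "S \<in> sets borel"
  shows "(\<lambda>x. emeasure (cond_measure \<rho> x) S) \<in> borel_measurable \<mu>"
proof -
  have "(\<lambda>p. RN_deriv lam \<rho> p * indicator S (snd p)) \<in> borel_measurable (borel :: ('x \<times> 'w) measure)"
    using assms by (intro borel_measurable_times_ennreal RN_deriv_lam_measurable
        measurable_compose[OF snd_measurable_borel borel_measurable_indicator])
  from measurable_nn_integral_L[OF this] show ?thesis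
    using assms by (simp add: emeasure_cond_measure)
qed

context
  fixes \<rho> :: "('x \<times> 'w) measure"
  assumes borel_prob_\<rho>: "borel_prob \<rho>" and abs_cont_\<rho>: "absolutely_continuous lam \<rho>"
begin

lemma density_RN_deriv_lam: "density lam (RN_deriv lam \<rho>) = \<rho>"
  using sigma_finite_measure.density_RN_deriv[OF _ abs_cont_\<rho>] borel_prob_\<rho> borel_prob_lam
  by (simp add: borel_prob_def prob_space_imp_sigma_finite)

lemma emeasure_eq_nn_integral_cond_measure:
  assumes S: "S \<in> sets borel"
  shows "emeasure \<rho> S = (\<integral>\<^sup>+x. emeasure (cond_measure \<rho> x) (Pair x -` S) \<partial>\<mu>)"
proof -
  have "emeasure \<rho> S = (\<integral>\<^sup>+p. RN_deriv lam \<rho> p * indicator S p \<partial>lam)"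
    using S by (subst (1) density_RN_deriv_lam[symmetric]) (simp add: emeasure_density sets_lam)
  also have "\<dots> = (\<integral>\<^sup>+x. \<integral>\<^sup>+w. RN_deriv lam \<rho> (x, w) * indicator S (x, w) \<partial>L x \<partial>\<mu>)"
    using S by (intro nn_integral_lam borel_measurable_times_ennreal RN_deriv_lam_measurable
        borel_measurable_indicator)
  also have "\<dots> = (\<integral>\<^sup>+x. emeasure (cond_measure \<rho> x) (Pair x -` S) \<partial>\<mu>)"
  proof (rule nn_integral_cong)
    fix x
    have "Pair x -` S \<in> sets borel"
      using measurable_sets[OF Pair_measurable_borel S] by simp
    then show "(\<integral>\<^sup>+w. RN_deriv lam \<rho> (x, w) * indicator S (x, w) \<partial>L x) =
        emeasure (cond_measure \<rho> x) (Pair x -` S)"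
      by (simp add: emeasure_cond_measure indicator_def)
  qed
  finally show ?thesis .
qed

lemma emeasure_Times_eq_nn_integral_cond_measure:
  assumes "E \<in> sets borel" "F \<in> sets borel"
  shows "emeasure \<rho> (E \<times> F) = (\<integral>\<^sup>+x. emeasure (cond_measure \<rho> x) F * indicator E x \<partial>\<mu>)"
proof -
  have "emeasure (cond_measure \<rho> x) (Pair x -` (E \<times> F)) = emeasure (cond_measure \<rho> x) F * indicator E x"
    for x by (simp add: indicator_def vimage_def)
  then show ?thesis
    using assms by (simp add: emeasure_eq_nn_integral_cond_measure borel_Times)
qed


lemma AE_cond_measure_eq_L:
  assumes "countable \<S>" "\<S> \<subseteq> sets borel"
    and "\<And>E S. E \<in> sets borel \<Longrightarrow> S \<in> \<S> \<Longrightarrow> emeasure \<rho> (E \<times> S) = emeasure lam (E \<times> S)"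
  shows "AE x in \<mu>. \<forall>S\<in>\<S>. emeasure (cond_measure \<rho> x) S = emeasure (L x) S"
  unfolding AE_ball_countable[OF assms(1)]
proof
  fix S assume "S \<in> \<S>"
  then have S: "S \<in> sets borel" using assms(2) by auto
  show "AE x in \<mu>. emeasure (cond_measure \<rho> x) S = emeasure (L x) S"
  proof (rule finite_measure.density_unique_finite_measure[OF finite_measure_\<mu>])
    show "(\<lambda>x. emeasure (cond_measure \<rho> x) S) \<in> borel_measurable \<mu>"
      using S by (rule measurable_emeasure_cond_measure)
    show "(\<lambda>x. emeasure (L x) S) \<in> borel_measurable \<mu>"
      using S measurable_compose[OF L_measurable measurable_emeasure_subprob_algebra] by simp
    fix E assume "E \<in> sets \<mu>"
    then show "(\<integral>\<^sup>+x. emeasure (cond_measure \<rho> x) S * indicator E x \<partial>\<mu>) =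
        (\<integral>\<^sup>+x. emeasure (L x) S * indicator E x \<partial>\<mu>)"
      using assms(3)[OF _ \<open>S \<in> \<S>\<close>] S
      by (simp add: sets_\<mu> emeasure_Times_eq_nn_integral_cond_measure emeasure_lam_Times)
  qed auto
qed

end

lemma AE_is_convex_comb_cond_measure:
  assumes "borel_prob \<rho>1" "absolutely_continuous lam \<rho>1"
    and "borel_prob \<rho>2" "absolutely_continuous lam \<rho>2"
    and convex: "is_convex_comb t \<rho>1 \<rho>2 lam"
  shows "AE x in \<mu>. is_convex_comb t (cond_measure \<rho>1 x) (cond_measure \<rho>2 x) (L x)"
proof -
  let ?f = "\<lambda>p. ennreal t * RN_deriv lam \<rho>1 p + ennreal (1 - t) * RN_deriv lam \<rho>2 p"
  have "density lam ?f = density lam (\<lambda>_. 1)"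
  proof (rule measure_eqI)
    fix A assume "A \<in> sets (density lam ?f)"
    then have A: "A \<in> sets borel" by (simp add: sets_lam)
    have "emeasure (density lam ?f) A = ennreal t * emeasure \<rho>1 A + ennreal (1 - t) * emeasure \<rho>2 A"
      using A assms(1-4) by (simp add: emeasure_density_convex_comb sets_lam density_RN_deriv_lam)
    also have "\<dots> = emeasure (density lam (\<lambda>_. 1)) A"
      using A convex by (simp add: is_convex_comb_def density_1)
    finally show "emeasure (density lam ?f) A = emeasure (density lam (\<lambda>_. 1)) A" .
  qed simp
  then have "AE p in lam. ?f p = 1"
    using borel_prob_lam
    by (intro sigma_finite_measure.density_unique) (auto simp: borel_prob_def prob_space_imp_sigma_finite)
  then have "AE x in \<mu>. AE w in L x. ?f (x, w) = 1"
    by (rule AE_lam_imp_AE_L)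
  then show ?thesis
  proof eventually_elim
    case (elim x)
    have L_eq: "L x = density (L x) (\<lambda>w. ?f (x, w))"
      using density_cong[OF _ _ elim] by (simp add: density_1 measurable_section_L)
    show ?case
      unfolding is_convex_comb_def cond_measure_def
    proof
      fix A :: "'w set" assume A: "A \<in> sets borel"
      have "emeasure (L x) A = emeasure (density (L x) (\<lambda>w. ?f (x, w))) A"
        by (subst L_eq[symmetric]) (rule refl)
      also have "\<dots> = ennreal t * emeasure (density (L x) (\<lambda>w. RN_deriv lam \<rho>1 (x, w))) A
          + ennreal (1 - t) * emeasure (density (L x) (\<lambda>w. RN_deriv lam \<rho>2 (x, w))) A"
        using A by (intro emeasure_density_convex_comb measurable_section_L RN_deriv_lam_measurable)
          (simp add: sets_L)
      finally show "emeasure (L x) A = ennreal t * emeasure (density (L x) (\<lambda>w. RN_deriv lam \<rho>1 (x, w))) A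
          + ennreal (1 - t) * emeasure (density (L x) (\<lambda>w. RN_deriv lam \<rho>2 (x, w))) A" .
    qed
  qed
qed

lemma measure_eq_if_AE_cond_measure_eq:
  assumes "borel_prob \<rho>1" "absolutely_continuous lam \<rho>1"
    and "borel_prob \<rho>2" "absolutely_continuous lam \<rho>2"
    and "AE x in \<mu>. cond_measure \<rho>1 x = cond_measure \<rho>2 x"
  shows "\<rho>1 = \<rho>2"
proof (rule measure_eqI)
  show "sets \<rho>1 = sets \<rho>2" using assms(1,3) by (simp add: borel_prob_def)
  fix S assume "S \<in> sets \<rho>1"
  then have S: "S \<in> sets borel" using assms(1) by (simp add: borel_prob_def)
  have "emeasure \<rho>1 S = (\<integral>\<^sup>+x. emeasure (cond_measure \<rho>1 x) (Pair x -` S) \<partial>\<mu>)"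
    by (rule emeasure_eq_nn_integral_cond_measure[OF assms(1,2) S])
  also have "\<dots> = (\<integral>\<^sup>+x. emeasure (cond_measure \<rho>2 x) (Pair x -` S) \<partial>\<mu>)"
    using assms(5) by (intro nn_integral_cong_AE) (auto elim: AE_mp)
  also have "\<dots> = emeasure \<rho>2 S"
    by (rule emeasure_eq_nn_integral_cond_measure[OF assms(3,4) S, symmetric])
  finally show "emeasure \<rho>1 S = emeasure \<rho>2 S" .
qed

end

lemma emeasure_vimage_eq_if_distr_eq:
  assumes "f \<in> borel \<rightarrow>\<^sub>M borel" "sets \<rho> = sets borel" "sets \<rho>' = sets borel"
    and "distr \<rho> borel f = distr \<rho>' borel f" "A \<in> sets borel"
  shows "emeasure \<rho> (f -` A) = emeasure \<rho>' (f -` A)"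
proof -
  have "emeasure M (f -` A) = emeasure (distr M borel f) A" if "sets M = sets borel" for M
    using that assms(1,5) sets_eq_imp_space_eq[OF that]
    by (simp add: emeasure_distr measurable_cong_sets[OF that refl])
  from this[OF assms(2)] this[OF assms(3)] show ?thesis
    using assms(4) by simp
qed

definition cylinders :: "'y set set \<Rightarrow> 'z set set \<Rightarrow> ('y \<times> 'z) set set" where
  "cylinders \<A> \<B> = (\<lambda>F. F \<times> UNIV) ` \<A> \<union> (\<lambda>F. UNIV \<times> F) ` \<B>"

lemma countable_cylinders: "countable \<A> \<Longrightarrow> countable \<B> \<Longrightarrow> countable (cylinders \<A> \<B>)"
  by (simp add: cylinders_def)

lemma cylinders_subset_sets_borel:
  "\<A> \<subseteq> sets borel \<Longrightarrow> \<B> \<subseteq> sets borel \<Longrightarrow> cylinders \<A> \<B> \<subseteq> sets borel"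
  by (auto simp: cylinders_def intro: borel_Times)

lemma emeasure_Times_cylinder_eq_if_marginals_eq:
  fixes \<rho> \<rho>' :: "('x::second_countable_topology \<times> 'y::second_countable_topology \<times> 'z::second_countable_topology) measure"
  assumes "sets \<rho> = sets borel" "sets \<rho>' = sets borel"
    and "distr \<rho> borel piXY = distr \<rho>' borel piXY" "distr \<rho> borel piXZ = distr \<rho>' borel piXZ"
    and "E \<in> sets borel" "S \<in> cylinders \<A> \<B>" "\<A> \<subseteq> sets borel" "\<B> \<subseteq> sets borel"
  shows "emeasure \<rho> (E \<times> S) = emeasure \<rho>' (E \<times> S)"
  using assms(6) unfolding cylinders_def
proof (elim UnE imageE)
  fix F assume S: "S = F \<times> UNIV" and "F \<in> \<A>"
  then have "E \<times> F \<in> sets borel" using assms(5,7) by (auto intro: borel_Times)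
  moreover have "E \<times> S = piXY -` (E \<times> F)" using S by (auto simp: piXY_def)
  ultimately show ?thesis
    using emeasure_vimage_eq_if_distr_eq[OF piXY_measurable_borel assms(1-3)] by simp
next
  fix F assume S: "S = UNIV \<times> F" and "F \<in> \<B>"
  then have "E \<times> F \<in> sets borel" using assms(5,8) by (auto intro: borel_Times)
  moreover have "E \<times> S = piXZ -` (E \<times> F)" using S by (auto simp: piXZ_def)
  ultimately show ?thesis
    using emeasure_vimage_eq_if_distr_eq[OF piXZ_measurable_borel assms(1,2,4)] by simp
qed

lemma couplings_if_eq_on_cylinders:
  fixes M :: "('y::topological_space \<times> 'z::topological_space) measure"
  assumes coupling: "Lx \<in> couplings Nx Gx" and sets_M: "sets M = sets borel"
    and \<A>: "Int_stable \<A>" "UNIV \<in> \<A>" "sets borel = sigma_sets UNIV \<A>" "\<A> \<subseteq> sets borel"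
    and \<B>: "Int_stable \<B>" "UNIV \<in> \<B>" "sets borel = sigma_sets UNIV \<B>" "\<B> \<subseteq> sets borel"
    and eq: "\<And>S. S \<in> cylinders \<A> \<B> \<Longrightarrow> emeasure M S = emeasure Lx S"
  shows "M \<in> couplings Nx Gx"
proof -
  have sets_Lx: "sets Lx = sets borel" and "prob_space Lx"
    using coupling by (auto simp: couplings_def borel_prob_def)
  then have "emeasure Lx UNIV = 1"
    using prob_space.emeasure_space_1[of Lx] sets_eq_imp_space_eq[OF sets_Lx] by simp
  moreover have "UNIV \<in> cylinders \<A> \<B>"
    using \<A>(2) unfolding cylinders_def by (auto intro!: image_eqI[of _ _ UNIV])
  ultimately have M_UNIV: "emeasure M UNIV = 1" using eq by simp
  have "distr M borel f = distr Lx borel f"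
    if f: "f \<in> borel \<rightarrow>\<^sub>M borel" and gen: "Int_stable \<C>" "UNIV \<in> \<C>" "sets borel = sigma_sets UNIV \<C>"
      and eq_\<C>: "\<And>C. C \<in> \<C> \<Longrightarrow> emeasure M (f -` C) = emeasure Lx (f -` C)" "\<C> \<subseteq> sets borel"
    for f :: "'y \<times> 'z \<Rightarrow> 'c::topological_space" and \<C>
  proof (rule finite_measure_eq_on_generator[OF gen])
    have space_M: "space M = UNIV" using sets_eq_imp_space_eq[OF sets_M] by simp
    show "emeasure (distr M borel f) UNIV \<noteq> \<infinity>"
      using M_UNIV f by (simp add: emeasure_distr measurable_cong_sets[OF sets_M refl] space_M)
    fix C assume "C \<in> \<C>"
    then show "emeasure (distr M borel f) C = emeasure (distr Lx borel f) C"
      using eq_\<C> f sets_eq_imp_space_eq[OF sets_M] sets_eq_imp_space_eq[OF sets_Lx]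
      by (auto simp: emeasure_distr measurable_cong_sets[OF sets_M refl] measurable_cong_sets[OF sets_Lx refl])
  qed simp_all
  from this[OF fst_measurable_borel \<A>(1-3)] this[OF snd_measurable_borel \<B>(1-3)]
  have "distr M borel fst = distr Lx borel fst" "distr M borel snd = distr Lx borel snd"
    using eq \<A>(4) \<B>(4) by (auto simp: cylinders_def vimage_fst vimage_snd)
  moreover have "prob_space M"
    using M_UNIV sets_eq_imp_space_eq[OF sets_M] by (intro prob_spaceI) simp
  ultimately show ?thesis
    using coupling sets_M by (simp add: couplings_def borel_prob_def)
qed

lemma eq_if_extreme_point_couplings:
  fixes M1 M2 :: "('y::topological_space \<times> 'z::topological_space) measure"
  assumes extreme: "extreme_point (couplings Nx Gx) Lx"
    and \<A>: "Int_stable \<A>" "UNIV \<in> \<A>" "sets borel = sigma_sets UNIV \<A>" "\<A> \<subseteq> sets borel"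
    and \<B>: "Int_stable \<B>" "UNIV \<in> \<B>" "sets borel = sigma_sets UNIV \<B>" "\<B> \<subseteq> sets borel"
    and M1: "sets M1 = sets borel" "\<forall>S\<in>cylinders \<A> \<B>. emeasure M1 S = emeasure Lx S"
    and M2: "sets M2 = sets borel" "\<forall>S\<in>cylinders \<A> \<B>. emeasure M2 S = emeasure Lx S"
    and convex: "is_convex_comb t M1 M2 Lx" "0 < t" "t < 1"
  shows "M1 = M2"
proof -
  have coupling: "Lx \<in> couplings Nx Gx" using extreme by (simp add: extreme_point_def)
  have "M1 \<in> couplings Nx Gx"
    by (rule couplings_if_eq_on_cylinders[OF coupling M1(1) \<A> \<B>]) (use M1(2) in blast)
  moreover have "M2 \<in> couplings Nx Gx"
    by (rule couplings_if_eq_on_cylinders[OF coupling M2(1) \<A> \<B>]) (use M2(2) in blast)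
  ultimately show ?thesis using extreme convex unfolding extreme_point_def by blast
qed


locale borel_disintegration_prod =
  borel_disintegration \<mu> lam L
  for \<mu> :: "'x::second_countable_topology measure"
    and lam :: "('x \<times> 'y::second_countable_topology \<times> 'z::second_countable_topology) measure"
    and L :: "'x \<Rightarrow> ('y \<times> 'z) measure"
begin

lemma AE_cond_measure_eq_L_on_cylinders:
  assumes "borel_prob \<rho>" "absolutely_continuous lam \<rho>"
    and "distr \<rho> borel piXY = distr lam borel piXY" "distr \<rho> borel piXZ = distr lam borel piXZ"
    and "countable \<A>" "\<A> \<subseteq> sets borel" "countable \<B>" "\<B> \<subseteq> sets borel"
  shows "AE x in \<mu>. \<forall>S\<in>cylinders \<A> \<B>. emeasure (cond_measure \<rho> x) S = emeasure (L x) S"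
proof (rule AE_cond_measure_eq_L[OF assms(1,2)])
  show "countable (cylinders \<A> \<B>)" using assms(5,7) by (rule countable_cylinders)
  show "cylinders \<A> \<B> \<subseteq> sets borel" using assms(6,8) by (rule cylinders_subset_sets_borel)
  show "emeasure \<rho> (E \<times> S) = emeasure lam (E \<times> S)"
    if "E \<in> sets borel" "S \<in> cylinders \<A> \<B>" for E S
    using that assms(1,3,4,6,8)
    by (intro emeasure_Times_cylinder_eq_if_marginals_eq) (auto simp: borel_prob_def sets_lam)
qed

lemma eq_if_convex_comb_with_same_marginals:
  assumes extreme: "AE x in \<mu>. extreme_point (couplings (N x) (G x)) (L x)"
    and \<rho>1: "borel_prob \<rho>1" "distr \<rho>1 borel piXY = distr lam borel piXY"
      "distr \<rho>1 borel piXZ = distr lam borel piXZ"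
    and \<rho>2: "borel_prob \<rho>2" "distr \<rho>2 borel piXY = distr lam borel piXY"
      "distr \<rho>2 borel piXZ = distr lam borel piXZ"
    and convex: "is_convex_comb t \<rho>1 \<rho>2 lam" and t: "0 < t" "t < 1"
  shows "\<rho>1 = \<rho>2"
proof -
  obtain \<A> :: "'y set set" where \<A>: "countable \<A>" "Int_stable \<A>" "UNIV \<in> \<A>"
      "sets borel = sigma_sets UNIV \<A>" "\<A> \<subseteq> sets borel"
    using countable_Int_stable_generator_borel by blast
  obtain \<B> :: "'z set set" where \<B>: "countable \<B>" "Int_stable \<B>" "UNIV \<in> \<B>"
      "sets borel = sigma_sets UNIV \<B>" "\<B> \<subseteq> sets borel"
    using countable_Int_stable_generator_borel by blast
  have ac: "absolutely_continuous lam \<rho>1" "absolutely_continuous lam \<rho>2"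
    using absolutely_continuous_if_is_convex_comb[OF convex]
      absolutely_continuous_if_is_convex_comb[OF is_convex_comb_commute[OF convex]] t \<rho>1(1) \<rho>2(1)
    by (auto simp: borel_prob_def sets_lam)
  have "AE x in \<mu>. cond_measure \<rho>1 x = cond_measure \<rho>2 x"
    using AE_cond_measure_eq_L_on_cylinders[OF \<rho>1(1) ac(1) \<rho>1(2,3) \<A>(1,5) \<B>(1,5)]
      AE_cond_measure_eq_L_on_cylinders[OF \<rho>2(1) ac(2) \<rho>2(2,3) \<A>(1,5) \<B>(1,5)]
      AE_is_convex_comb_cond_measure[OF \<rho>1(1) ac(1) \<rho>2(1) ac(2) convex] extreme
  proof eventually_elim
    case (elim x)
    show ?case
      by (rule eq_if_extreme_point_couplings[OF elim(4) \<A>(2-5) \<B>(2-5) _ elim(1) _ elim(2) elim(3) t])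
        (simp_all add: sets_cond_measure)
  qed
  then show ?thesis
    by (rule measure_eq_if_AE_cond_measure_eq[OF \<rho>1(1) ac(1) \<rho>2(1) ac(2)])
qed

end

theorem mainTheorem12:
  fixes \<mu> :: "'x::polish_space measure" and \<nu> :: "'y::polish_space measure"
    and \<gamma> :: "'z::polish_space measure"
    and lam :: "('x \<times> 'y \<times> 'z) measure"
    and L :: "'x \<Rightarrow> ('y \<times> 'z) measure"
    and N :: "'x \<Rightarrow> 'y measure" and G :: "'x \<Rightarrow> 'z measure"
  assumes "borel_prob \<mu>" and "borel_prob \<nu>" and "borel_prob \<gamma>"
    and "lam \<in> couplings3 \<mu> \<nu> \<gamma>"
    and "disintegration L \<mu> lam"
    and "disintegration N \<mu> (distr lam borel piXY)"
    and "disintegration G \<mu> (distr lam borel piXZ)"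
    and "AE x in \<mu>. L x \<in> couplings (N x) (G x)"
    and "AE x in \<mu>. extreme_point (couplings (N x) (G x)) (L x)"
  shows "extreme_point
           (couplings_XY \<mu> \<nu> \<gamma> (distr lam borel piXY) \<inter> couplings_XZ \<mu> \<nu> \<gamma> (distr lam borel piXZ)) lam"
proof -
  interpret borel_disintegration_prod \<mu> lam L
    using assms(1,4,5) by unfold_locales (simp_all add: couplings3_def)
  have "lam \<in> couplings_XY \<mu> \<nu> \<gamma> (distr lam borel piXY) \<inter> couplings_XZ \<mu> \<nu> \<gamma> (distr lam borel piXZ)"
    using assms(4) by (simp add: couplings_XY_def couplings_XZ_def)
  then show ?thesis
    unfolding extreme_point_def
    by (auto simp: couplings_XY_def couplings_XZ_def couplings3_def
        intro: eq_if_convex_comb_with_same_marginals[OF assms(9)])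
qed

end
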